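(* Let $(A,\mu,\Delta,\alpha,\beta,\psi,\omega)$ be an infinitesimal BiHom-bialgebra (with $\mu(a\otimes b)=a\cdot b$). Define left and right actions of $A$ on $A\otimes A$ by $a\cdot(b\otimes c)=\omega(a)\cdot b\otimes\beta(c)$ and $(b\otimes c)\cdot a=\alpha(b)\otimes c\cdot\psi(a)$ for $a,b,c\in A$. Then $(A\otimes A,\alpha\otimes\alpha,\beta\otimes\beta)$ with these actions is an $A$-bimodule, and $\Delta$ is a derivation of $A$ with values in it, i.e. $\Delta(a\cdot b)=a\cdot\Delta(b)+\Delta(a)\cdot b$ for all $a,b\in A$.
   Context: Work over a field. A BiHom-associative algebra is a 4-tuple $(A,\mu,\alpha,\beta)$ with $\alpha,\beta$ commuting linear maps, multiplicative for $\mu$, and $\alpha(x)\cdot(y\cdot z)=(x\cdot y)\cdot\beta(z)$. A BiHom-coassociative coalgebra is $(C,\Delta,\psi,\omega)$ with $\psi\omega=\omega\psi$, $(\psi\otimes\psi)\Delta=\Delta\psi$, $(\omega\otimes\omega)\Delta=\Delta\omega$ and $(\Delta\otimes\psi)\Delta=(\omega\otimes\Delta)\Delta$. An infinitesimal BiHom-bialgebra is a 7-tuple $(A,\mu,\Delta,\alpha,\beta,\psi,\omega)$ with $(A,\mu,\alpha,\beta)$ BiHom-associative, $(A,\Delta,\psi,\omega)$ BiHom-coassociative, and for all $a,b$ (with $\Delta(a)=a_1\otimes a_2$): $\Delta(a\cdot b)=\omega(a)\cdot b_1\otimes\beta(b_2)+\alpha(a_1)\otimes a_2\cdot\psi(b)$;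 $\alpha\psi=\psi\alpha$, $\alpha\omega=\omega\alpha$, $\beta\psi=\psi\beta$, $\beta\omega=\omega\beta$; $(\alpha\otimes\alpha)\Delta=\Delta\alpha$, $(\beta\otimes\beta)\Delta=\Delta\beta$; $\psi,\omega$ multiplicative. For a BiHom-associative algebra $(A,\mu,\alpha,\beta)$ and $(M,\alpha_M,\beta_M)$ with commuting linear $\alpha_M,\beta_M$: $M$ is a left $A$-module via $a\otimes m\mapsto a\cdot m$ if $\alpha_M(a\cdot m)=\alpha(a)\cdot\alpha_M(m)$, $\beta_M(a\cdot m)=\beta(a)\cdot\beta_M(m)$, $\alpha(a)\cdot(a'\cdot m)=(a\cdot a')\cdot\beta_M(m)$; a right $A$-module via $m\otimes a\mapsto m\cdot a$ if $\alpha_M(m\cdot a)=\alpha_M(m)\cdot\alpha(a)$, $\beta_M(m\cdot a)=\beta_M(m)\cdot\beta(a)$, $\alpha_M(m)\cdot(a\cdot a')=(m\cdot a)\cdot\beta(a')$; an $A$-bimodule if both and $\alpha(a)\cdot(m\cdot a')=(a\cdot m)\cdot\beta(a')$. *)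

theory Defs
  imports Complex_Main
begin

text \<open>Vector spaces over a field 'k are given by a scalar multiplication
  (library locale vector_space); linear maps by the library predicate
  Vector_Spaces.linear.\<close>

definition bilin ::
  "('k::field \<Rightarrow> 'a::ab_group_add \<Rightarrow> 'a) \<Rightarrow> ('k \<Rightarrow> 'b::ab_group_add \<Rightarrow> 'b)
   \<Rightarrow> ('k \<Rightarrow> 'c::ab_group_add \<Rightarrow> 'c) \<Rightarrow> ('a \<Rightarrow> 'b \<Rightarrow> 'c) \<Rightarrow> bool" where
  "bilin s1 s2 s3 h \<longleftrightarrow>
     (\<forall>x. Vector_Spaces.linear s2 s3 (h x)) \<and> (\<forall>y. Vector_Spaces.linear s1 s3 (\<lambda>x. h x y))"

definition trilin ::
  "('k::field \<Rightarrow> 'a::ab_group_add \<Rightarrow> 'a) \<Rightarrow> ('k \<Rightarrow> 'c::ab_group_add \<Rightarrow> 'c)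
   \<Rightarrow> ('a \<Rightarrow> 'a \<Rightarrow> 'a \<Rightarrow> 'c) \<Rightarrow> bool" where
  "trilin s1 s3 h \<longleftrightarrow>
     (\<forall>x y. Vector_Spaces.linear s1 s3 (h x y)) \<and>
     (\<forall>x z. Vector_Spaces.linear s1 s3 (\<lambda>y. h x y z)) \<and>
     (\<forall>y z. Vector_Spaces.linear s1 s3 (\<lambda>x. h x y z))"

definition tensor_univ ::
  "('k::field \<Rightarrow> 'a::ab_group_add \<Rightarrow> 'a) \<Rightarrow> ('k \<Rightarrow> 't::ab_group_add \<Rightarrow> 't)
   \<Rightarrow> ('a \<Rightarrow> 'a \<Rightarrow> 't) \<Rightarrow> ('k \<Rightarrow> 'v::ab_group_add \<Rightarrow> 'v) \<Rightarrow> bool" where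
  "tensor_univ sa st tn sv \<longleftrightarrow>
     (\<forall>h. bilin sa sa sv h \<longrightarrow>
        (\<exists>!g. Vector_Spaces.linear st sv g \<and> (\<forall>x y. g (tn x y) = h x y)))"

definition tensor3_univ ::
  "('k::field \<Rightarrow> 'a::ab_group_add \<Rightarrow> 'a) \<Rightarrow> ('k \<Rightarrow> 'u::ab_group_add \<Rightarrow> 'u)
   \<Rightarrow> ('a \<Rightarrow> 'a \<Rightarrow> 'a \<Rightarrow> 'u) \<Rightarrow> ('k \<Rightarrow> 'v::ab_group_add \<Rightarrow> 'v) \<Rightarrow> bool" where
  "tensor3_univ sa su tn3 sv \<longleftrightarrow>
     (\<forall>h. trilin sa sv h \<longrightarrow>
        (\<exists>!g. Vector_Spaces.linear su sv g \<and> (\<forall>x y z. g (tn3 x y z) = h x y z)))"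

text \<open>The universal property for the scalar field itself already characterises
  the tensor product up to isomorphism; since HOL cannot quantify over types
  inside a formula, we additionally record it for the other target spaces used
  (A \<otimes> A itself and A \<otimes> A \<otimes> A), which every tensor product satisfies.\<close>

definition is_tensor2 ::
  "('k::field \<Rightarrow> 'a::ab_group_add \<Rightarrow> 'a) \<Rightarrow> ('k \<Rightarrow> 't::ab_group_add \<Rightarrow> 't)
   \<Rightarrow> ('a \<Rightarrow> 'a \<Rightarrow> 't) \<Rightarrow> ('k \<Rightarrow> 'u::ab_group_add \<Rightarrow> 'u) \<Rightarrow> bool" where
  "is_tensor2 sa st tn su \<longleftrightarrow>
     vector_space sa \<and> vector_space st \<and> bilin sa sa st tn \<and>
     tensor_univ sa st tn ((*) :: 'k \<Rightarrow> 'k \<Rightarrow> 'k) \<and> tensor_univ sa st tn st \<and>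
     tensor_univ sa st tn su"

definition is_tensor3 ::
  "('k::field \<Rightarrow> 'a::ab_group_add \<Rightarrow> 'a) \<Rightarrow> ('k \<Rightarrow> 'u::ab_group_add \<Rightarrow> 'u)
   \<Rightarrow> ('a \<Rightarrow> 'a \<Rightarrow> 'a \<Rightarrow> 'u) \<Rightarrow> bool" where
  "is_tensor3 sa su tn3 \<longleftrightarrow>
     vector_space sa \<and> vector_space su \<and> trilin sa su tn3 \<and>
     tensor3_univ sa su tn3 ((*) :: 'k \<Rightarrow> 'k \<Rightarrow> 'k) \<and> tensor3_univ sa su tn3 su"

definition ext2 ::
  "('k::field \<Rightarrow> 't::ab_group_add \<Rightarrow> 't) \<Rightarrow> ('k \<Rightarrow> 'v::ab_group_add \<Rightarrow> 'v)
   \<Rightarrow> ('a \<Rightarrow> 'a \<Rightarrow> 't) \<Rightarrow> ('a \<Rightarrow> 'a \<Rightarrow> 'v) \<Rightarrow> 't \<Rightarrow> 'v" where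
  "ext2 st sv tn h = (THE g. Vector_Spaces.linear st sv g \<and> (\<forall>x y. g (tn x y) = h x y))"

definition tmap ::
  "('k::field \<Rightarrow> 't::ab_group_add \<Rightarrow> 't) \<Rightarrow> ('a \<Rightarrow> 'a \<Rightarrow> 't)
   \<Rightarrow> ('a \<Rightarrow> 'a) \<Rightarrow> ('a \<Rightarrow> 'a) \<Rightarrow> 't \<Rightarrow> 't" where
  "tmap st tn f g = ext2 st st tn (\<lambda>x y. tn (f x) (g y))"

text \<open>w \<otimes> z and z \<otimes> w in A \<otimes> A \<otimes> A for w in A \<otimes> A and z in A
  (identifying (A\<otimes>A)\<otimes>A and A\<otimes>(A\<otimes>A) with A\<otimes>A\<otimes>A).\<close>

definition tens_r ::
  "('k::field \<Rightarrow> 't::ab_group_add \<Rightarrow> 't) \<Rightarrow> ('k \<Rightarrow> 'u::ab_group_add \<Rightarrow> 'u)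
   \<Rightarrow> ('a \<Rightarrow> 'a \<Rightarrow> 't) \<Rightarrow> ('a \<Rightarrow> 'a \<Rightarrow> 'a \<Rightarrow> 'u) \<Rightarrow> 't \<Rightarrow> 'a \<Rightarrow> 'u" where
  "tens_r st su tn tn3 w z = ext2 st su tn (\<lambda>x y. tn3 x y z) w"

definition tens_l ::
  "('k::field \<Rightarrow> 't::ab_group_add \<Rightarrow> 't) \<Rightarrow> ('k \<Rightarrow> 'u::ab_group_add \<Rightarrow> 'u)
   \<Rightarrow> ('a \<Rightarrow> 'a \<Rightarrow> 't) \<Rightarrow> ('a \<Rightarrow> 'a \<Rightarrow> 'a \<Rightarrow> 'u) \<Rightarrow> 'a \<Rightarrow> 't \<Rightarrow> 'u" where
  "tens_l st su tn tn3 z w = ext2 st su tn (\<lambda>x y. tn3 z x y) w"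

definition tmap_r ::
  "('k::field \<Rightarrow> 't::ab_group_add \<Rightarrow> 't) \<Rightarrow> ('k \<Rightarrow> 'u::ab_group_add \<Rightarrow> 'u)
   \<Rightarrow> ('a \<Rightarrow> 'a \<Rightarrow> 't) \<Rightarrow> ('a \<Rightarrow> 'a \<Rightarrow> 'a \<Rightarrow> 'u) \<Rightarrow> ('a \<Rightarrow> 't) \<Rightarrow> ('a \<Rightarrow> 'a) \<Rightarrow> 't \<Rightarrow> 'u" where
  "tmap_r st su tn tn3 f g = ext2 st su tn (\<lambda>x y. tens_r st su tn tn3 (f x) (g y))"

definition tmap_l ::
  "('k::field \<Rightarrow> 't::ab_group_add \<Rightarrow> 't) \<Rightarrow> ('k \<Rightarrow> 'u::ab_group_add \<Rightarrow> 'u)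
   \<Rightarrow> ('a \<Rightarrow> 'a \<Rightarrow> 't) \<Rightarrow> ('a \<Rightarrow> 'a \<Rightarrow> 'a \<Rightarrow> 'u) \<Rightarrow> ('a \<Rightarrow> 'a) \<Rightarrow> ('a \<Rightarrow> 't) \<Rightarrow> 't \<Rightarrow> 'u" where
  "tmap_l st su tn tn3 f g = ext2 st su tn (\<lambda>x y. tens_l st su tn tn3 (f x) (g y))"

definition bihom_assoc_alg ::
  "('k::field \<Rightarrow> 'a::ab_group_add \<Rightarrow> 'a) \<Rightarrow> ('a \<Rightarrow> 'a \<Rightarrow> 'a) \<Rightarrow> ('a \<Rightarrow> 'a) \<Rightarrow> ('a \<Rightarrow> 'a) \<Rightarrow> bool" where
  "bihom_assoc_alg sa mu alpha beta \<longleftrightarrow>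
     vector_space sa \<and> bilin sa sa sa mu \<and>
     Vector_Spaces.linear sa sa alpha \<and> Vector_Spaces.linear sa sa beta \<and>
     alpha \<circ> beta = beta \<circ> alpha \<and>
     (\<forall>x y. alpha (mu x y) = mu (alpha x) (alpha y)) \<and>
     (\<forall>x y. beta (mu x y) = mu (beta x) (beta y)) \<and>
     (\<forall>x y z. mu (alpha x) (mu y z) = mu (mu x y) (beta z))"

definition bihom_coassoc_coalg ::
  "('k::field \<Rightarrow> 'a::ab_group_add \<Rightarrow> 'a) \<Rightarrow> ('k \<Rightarrow> 't::ab_group_add \<Rightarrow> 't) \<Rightarrow> ('a \<Rightarrow> 'a \<Rightarrow> 't)
   \<Rightarrow> ('k \<Rightarrow> 'u::ab_group_add \<Rightarrow> 'u) \<Rightarrow> ('a \<Rightarrow> 'a \<Rightarrow> 'a \<Rightarrow> 'u)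
   \<Rightarrow> ('a \<Rightarrow> 't) \<Rightarrow> ('a \<Rightarrow> 'a) \<Rightarrow> ('a \<Rightarrow> 'a) \<Rightarrow> bool" where
  "bihom_coassoc_coalg sa st tn su tn3 Delta psi omega \<longleftrightarrow>
     vector_space sa \<and> Vector_Spaces.linear sa st Delta \<and>
     Vector_Spaces.linear sa sa psi \<and> Vector_Spaces.linear sa sa omega \<and>
     psi \<circ> omega = omega \<circ> psi \<and>
     (\<forall>x. tmap st tn psi psi (Delta x) = Delta (psi x)) \<and>
     (\<forall>x. tmap st tn omega omega (Delta x) = Delta (omega x)) \<and>
     (\<forall>x. tmap_r st su tn tn3 Delta psi (Delta x) = tmap_l st su tn tn3 omega Delta (Delta x))"

definition tens_lact ::
  "('k::field \<Rightarrow> 't::ab_group_add \<Rightarrow> 't) \<Rightarrow> ('a \<Rightarrow> 'a \<Rightarrow> 't) \<Rightarrow> ('a \<Rightarrow> 'a \<Rightarrow> 'a)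
   \<Rightarrow> ('a \<Rightarrow> 'a) \<Rightarrow> ('a \<Rightarrow> 'a) \<Rightarrow> 'a \<Rightarrow> 't \<Rightarrow> 't" where
  "tens_lact st tn mu beta omega a = tmap st tn (\<lambda>b. mu (omega a) b) beta"

definition tens_ract ::
  "('k::field \<Rightarrow> 't::ab_group_add \<Rightarrow> 't) \<Rightarrow> ('a \<Rightarrow> 'a \<Rightarrow> 't) \<Rightarrow> ('a \<Rightarrow> 'a \<Rightarrow> 'a)
   \<Rightarrow> ('a \<Rightarrow> 'a) \<Rightarrow> ('a \<Rightarrow> 'a) \<Rightarrow> 't \<Rightarrow> 'a \<Rightarrow> 't" where
  "tens_ract st tn mu alpha psi m a = tmap st tn alpha (\<lambda>c. mu c (psi a)) m"

definition inf_bihom_bialg ::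
  "('k::field \<Rightarrow> 'a::ab_group_add \<Rightarrow> 'a) \<Rightarrow> ('k \<Rightarrow> 't::ab_group_add \<Rightarrow> 't) \<Rightarrow> ('a \<Rightarrow> 'a \<Rightarrow> 't)
   \<Rightarrow> ('k \<Rightarrow> 'u::ab_group_add \<Rightarrow> 'u) \<Rightarrow> ('a \<Rightarrow> 'a \<Rightarrow> 'a \<Rightarrow> 'u)
   \<Rightarrow> ('a \<Rightarrow> 'a \<Rightarrow> 'a) \<Rightarrow> ('a \<Rightarrow> 't)
   \<Rightarrow> ('a \<Rightarrow> 'a) \<Rightarrow> ('a \<Rightarrow> 'a) \<Rightarrow> ('a \<Rightarrow> 'a) \<Rightarrow> ('a \<Rightarrow> 'a) \<Rightarrow> bool" where
  "inf_bihom_bialg sa st tn su tn3 mu Delta alpha beta psi omega \<longleftrightarrow>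
     bihom_assoc_alg sa mu alpha beta \<and>
     bihom_coassoc_coalg sa st tn su tn3 Delta psi omega \<and>
     (\<forall>a b. Delta (mu a b) =
        tmap st tn (\<lambda>x. mu (omega a) x) beta (Delta b) + tmap st tn alpha (\<lambda>y. mu y (psi b)) (Delta a)) \<and>
     alpha \<circ> psi = psi \<circ> alpha \<and> alpha \<circ> omega = omega \<circ> alpha \<and>
     beta \<circ> psi = psi \<circ> beta \<and> beta \<circ> omega = omega \<circ> beta \<and>
     (\<forall>x. tmap st tn alpha alpha (Delta x) = Delta (alpha x)) \<and>
     (\<forall>x. tmap st tn beta beta (Delta x) = Delta (beta x)) \<and>
     (\<forall>x y. psi (mu x y) = mu (psi x) (psi y)) \<and>
     (\<forall>x y. omega (mu x y) = mu (omega x) (omega y))"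

definition bihom_left_module ::
  "('k::field \<Rightarrow> 'a::ab_group_add \<Rightarrow> 'a) \<Rightarrow> ('a \<Rightarrow> 'a \<Rightarrow> 'a) \<Rightarrow> ('a \<Rightarrow> 'a) \<Rightarrow> ('a \<Rightarrow> 'a)
   \<Rightarrow> ('k \<Rightarrow> 'm::ab_group_add \<Rightarrow> 'm) \<Rightarrow> ('m \<Rightarrow> 'm) \<Rightarrow> ('m \<Rightarrow> 'm) \<Rightarrow> ('a \<Rightarrow> 'm \<Rightarrow> 'm) \<Rightarrow> bool" where
  "bihom_left_module sa mu alpha beta sm alphaM betaM act \<longleftrightarrow>
     bihom_assoc_alg sa mu alpha beta \<and> vector_space sm \<and>
     Vector_Spaces.linear sm sm alphaM \<and> Vector_Spaces.linear sm sm betaM \<and>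
     alphaM \<circ> betaM = betaM \<circ> alphaM \<and> bilin sa sm sm act \<and>
     (\<forall>a m. alphaM (act a m) = act (alpha a) (alphaM m)) \<and>
     (\<forall>a m. betaM (act a m) = act (beta a) (betaM m)) \<and>
     (\<forall>a a' m. act (alpha a) (act a' m) = act (mu a a') (betaM m))"

definition bihom_right_module ::
  "('k::field \<Rightarrow> 'a::ab_group_add \<Rightarrow> 'a) \<Rightarrow> ('a \<Rightarrow> 'a \<Rightarrow> 'a) \<Rightarrow> ('a \<Rightarrow> 'a) \<Rightarrow> ('a \<Rightarrow> 'a)
   \<Rightarrow> ('k \<Rightarrow> 'm::ab_group_add \<Rightarrow> 'm) \<Rightarrow> ('m \<Rightarrow> 'm) \<Rightarrow> ('m \<Rightarrow> 'm) \<Rightarrow> ('m \<Rightarrow> 'a \<Rightarrow> 'm) \<Rightarrow> bool" where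
  "bihom_right_module sa mu alpha beta sm alphaM betaM act \<longleftrightarrow>
     bihom_assoc_alg sa mu alpha beta \<and> vector_space sm \<and>
     Vector_Spaces.linear sm sm alphaM \<and> Vector_Spaces.linear sm sm betaM \<and>
     alphaM \<circ> betaM = betaM \<circ> alphaM \<and> bilin sm sa sm act \<and>
     (\<forall>m a. alphaM (act m a) = act (alphaM m) (alpha a)) \<and>
     (\<forall>m a. betaM (act m a) = act (betaM m) (beta a)) \<and>
     (\<forall>m a a'. act (alphaM m) (mu a a') = act (act m a) (beta a'))"

definition bihom_bimodule ::
  "('k::field \<Rightarrow> 'a::ab_group_add \<Rightarrow> 'a) \<Rightarrow> ('a \<Rightarrow> 'a \<Rightarrow> 'a) \<Rightarrow> ('a \<Rightarrow> 'a) \<Rightarrow> ('a \<Rightarrow> 'a)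
   \<Rightarrow> ('k \<Rightarrow> 'm::ab_group_add \<Rightarrow> 'm) \<Rightarrow> ('m \<Rightarrow> 'm) \<Rightarrow> ('m \<Rightarrow> 'm)
   \<Rightarrow> ('a \<Rightarrow> 'm \<Rightarrow> 'm) \<Rightarrow> ('m \<Rightarrow> 'a \<Rightarrow> 'm) \<Rightarrow> bool" where
  "bihom_bimodule sa mu alpha beta sm alphaM betaM lact ract \<longleftrightarrow>
     bihom_left_module sa mu alpha beta sm alphaM betaM lact \<and>
     bihom_right_module sa mu alpha beta sm alphaM betaM ract \<and>
     (\<forall>a m a'. lact (alpha a) (ract m a') = ract (lact a m) (beta a'))"

end

theory Submission
  imports Defs
begin

text \<open>Every map of A \<otimes> A occurring in the statement is of the form f \<otimes> g, and linear maps on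
  A \<otimes> A are determined by their values on pure tensors. Each bimodule axiom therefore reduces,
  through the functoriality (f \<otimes> g) \<circ> (f' \<otimes> g') = (f \<circ> f') \<otimes> (g \<circ> g'), to an identity of maps
  on A, which is BiHom-associativity, multiplicativity of the structure maps or their
  commutation. The derivation property is the compatibility axiom of the infinitesimal
  bialgebra read through the definition of the two actions; neither coassociativity nor the
  triple tensor product plays a role.\<close>

locale tensor_square =
  fixes sa :: "'k::field \<Rightarrow> 'a::ab_group_add \<Rightarrow> 'a"
    and st :: "'k \<Rightarrow> 't::ab_group_add \<Rightarrow> 't"
    and tn :: "'a \<Rightarrow> 'a \<Rightarrow> 't"
  assumes vector_space_t: "vector_space st"
    and bilin_tn: "bilin sa sa st tn"
    and tensor_univ_t: "tensor_univ sa st tn st"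
begin

sublocale vt: vector_space_pair st st
  by (simp add: vector_space_pair_def vector_space_t)

lemma linear_tn_left: "Vector_Spaces.linear sa st (\<lambda>x. tn x y)"
  and linear_tn_right: "Vector_Spaces.linear sa st (tn x)"
  using bilin_tn unfolding bilin_def by auto

lemma linear_eq_on_pure_tensors:
  assumes "Vector_Spaces.linear st st F" "Vector_Spaces.linear st st G"
    and "\<And>x y. F (tn x y) = G (tn x y)"
  shows "F = G"
proof -
  have "bilin sa sa st (\<lambda>x y. G (tn x y))"
    using bilin_tn assms(2) unfolding bilin_def
    by (auto intro: Vector_Spaces.linear_compose[where g = G, unfolded o_def])
  then have "\<exists>!g. Vector_Spaces.linear st st g \<and> (\<forall>x y. g (tn x y) = G (tn x y))"
    using tensor_univ_t unfolding tensor_univ_def by blast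
  then show ?thesis
    using assms by metis
qed

lemma tmap_linear_and_tn:
  assumes "Vector_Spaces.linear sa sa f" "Vector_Spaces.linear sa sa g"
  shows "Vector_Spaces.linear st st (tmap st tn f g) \<and> (\<forall>x y. tmap st tn f g (tn x y) = tn (f x) (g y))"
proof -
  have "bilin sa sa st (\<lambda>x y. tn (f x) (g y))"
    using bilin_tn unfolding bilin_def
    using Vector_Spaces.linear_compose[OF assms(1), unfolded o_def]
      Vector_Spaces.linear_compose[OF assms(2), unfolded o_def] by blast
  then have "\<exists>!h. Vector_Spaces.linear st st h \<and> (\<forall>x y. h (tn x y) = tn (f x) (g y))"
    using tensor_univ_t unfolding tensor_univ_def by blast
  from theI'[OF this] show ?thesis
    unfolding tmap_def ext2_def .
qed

lemma tmap_linear: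
  "Vector_Spaces.linear sa sa f \<Longrightarrow> Vector_Spaces.linear sa sa g \<Longrightarrow>
    Vector_Spaces.linear st st (tmap st tn f g)"
  using tmap_linear_and_tn by blast

lemma tmap_tn [simp]:
  "Vector_Spaces.linear sa sa f \<Longrightarrow> Vector_Spaces.linear sa sa g \<Longrightarrow>
    tmap st tn f g (tn x y) = tn (f x) (g y)"
  using tmap_linear_and_tn by blast

lemma tmap_tmap:
  assumes "Vector_Spaces.linear sa sa f" "Vector_Spaces.linear sa sa g"
    and "Vector_Spaces.linear sa sa f'" "Vector_Spaces.linear sa sa g'"
  shows "tmap st tn f g (tmap st tn f' g' m) = tmap st tn (f \<circ> f') (g \<circ> g') m"
proof -
  have "tmap st tn f g \<circ> tmap st tn f' g' = tmap st tn (f \<circ> f') (g \<circ> g')"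
  proof (rule linear_eq_on_pure_tensors)
    show "Vector_Spaces.linear st st (tmap st tn f g \<circ> tmap st tn f' g')"
      using assms by (intro Vector_Spaces.linear_compose[OF tmap_linear tmap_linear])
    show "Vector_Spaces.linear st st (tmap st tn (f \<circ> f') (g \<circ> g'))"
      using assms by (intro Vector_Spaces.linear_compose tmap_linear)
    show "(tmap st tn f g \<circ> tmap st tn f' g') (tn x y) = tmap st tn (f \<circ> f') (g \<circ> g') (tn x y)" for x y
      using assms by (simp add: Vector_Spaces.linear_compose)
  qed
  then show ?thesis
    by (metis comp_apply)
qed

lemma linear_in_parameter:
  assumes "vector_space sb"
    and "\<And>a. Vector_Spaces.linear st st (F a)"
    and "\<And>x y. Vector_Spaces.linear sb st (\<lambda>a. F a (tn x y))"
  shows "Vector_Spaces.linear sb st (\<lambda>a. F a m)"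
proof -
  have "F (a + b) = (\<lambda>m. F a m + F b m)" for a b
  proof (rule linear_eq_on_pure_tensors)
    show "F (a + b) (tn x y) = F a (tn x y) + F b (tn x y)" for x y
      using assms(3)[of x y] unfolding Vector_Spaces.linear_iff by blast
  qed (use assms(2) vt.linear_compose_add in auto)
  moreover have "F (sb c a) = (\<lambda>m. st c (F a m))" for a c
  proof (rule linear_eq_on_pure_tensors)
    show "F (sb c a) (tn x y) = st c (F a (tn x y))" for x y
      using assms(3)[of x y] unfolding Vector_Spaces.linear_iff by blast
  qed (use assms(2) vt.linear_compose_scale_right in auto)
  ultimately show ?thesis
    unfolding Vector_Spaces.linear_iff using assms(1) vector_space_t by metis
qed

lemma tmap_diag_commute:
  assumes "Vector_Spaces.linear sa sa f" "Vector_Spaces.linear sa sa g" "f \<circ> g = g \<circ> f"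
  shows "tmap st tn f f \<circ> tmap st tn g g = tmap st tn g g \<circ> tmap st tn f f"
  by (rule ext) (simp add: assms tmap_tmap)

lemma bihom_assoc_alg_linear:
  assumes "bihom_assoc_alg sa mu alpha beta"
  shows "vector_space sa" "Vector_Spaces.linear sa sa alpha" "Vector_Spaces.linear sa sa beta"
    "Vector_Spaces.linear sa sa (mu x)" "Vector_Spaces.linear sa sa (\<lambda>x. mu x y)"
  using assms unfolding bihom_assoc_alg_def bilin_def by auto

lemma tens_lact_left_module:
  assumes alg: "bihom_assoc_alg sa mu alpha beta"
    and lin_omega: "Vector_Spaces.linear sa sa omega"
    and mult_omega: "\<And>x y. omega (mu x y) = mu (omega x) (omega y)"
    and "alpha \<circ> omega = omega \<circ> alpha" "beta \<circ> omega = omega \<circ> beta"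
  shows "bihom_left_module sa mu alpha beta st (tmap st tn alpha alpha) (tmap st tn beta beta)
    (tens_lact st tn mu beta omega)"
proof -
  note lin [simp] = bihom_assoc_alg_linear[OF alg] lin_omega
  from alg have "alpha \<circ> beta = beta \<circ> alpha"
    and mult_alpha: "\<And>x y. alpha (mu x y) = mu (alpha x) (alpha y)"
    and mult_beta: "\<And>x y. beta (mu x y) = mu (beta x) (beta y)"
    and assoc: "\<And>x y z. mu (alpha x) (mu y z) = mu (mu x y) (beta z)"
    unfolding bihom_assoc_alg_def by auto
  with assms have comm: "alpha (beta x) = beta (alpha x)" "alpha (omega x) = omega (alpha x)"
    "beta (omega x) = omega (beta x)" for x
    by (metis comp_apply)+
  have "Vector_Spaces.linear sa st (\<lambda>a. tens_lact st tn mu beta omega a m)" for m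
    unfolding tens_lact_def
  proof (rule linear_in_parameter)
    show "Vector_Spaces.linear sa st (\<lambda>a. tmap st tn (mu (omega a)) beta (tn x y))" for x y
      using Vector_Spaces.linear_compose[OF Vector_Spaces.linear_compose[OF lin_omega lin(5)] linear_tn_left]
      by (simp add: o_def)
  qed (simp_all add: tmap_linear)
  then have "bilin sa st st (tens_lact st tn mu beta omega)"
    unfolding bilin_def tens_lact_def by (simp add: tmap_linear)
  moreover have "alpha \<circ> mu (omega a) = mu (omega (alpha a)) \<circ> alpha" for a
    by (simp add: fun_eq_iff mult_alpha comm)
  moreover have "beta \<circ> mu (omega a) = mu (omega (beta a)) \<circ> beta" for a
    by (simp add: fun_eq_iff mult_beta comm)
  moreover have "mu (omega (alpha a)) \<circ> mu (omega a') = mu (omega (mu a a')) \<circ> beta" for a a'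
    by (simp add: fun_eq_iff mult_omega assoc flip: comm)
  ultimately show ?thesis
    unfolding bihom_left_module_def tens_lact_def
    using alg vector_space_t tmap_diag_commute[of alpha beta] \<open>alpha \<circ> beta = beta \<circ> alpha\<close>
    by (simp add: tmap_linear tmap_tmap)
qed

lemma tens_ract_right_module:
  assumes alg: "bihom_assoc_alg sa mu alpha beta"
    and lin_psi: "Vector_Spaces.linear sa sa psi"
    and mult_psi: "\<And>x y. psi (mu x y) = mu (psi x) (psi y)"
    and "alpha \<circ> psi = psi \<circ> alpha" "beta \<circ> psi = psi \<circ> beta"
  shows "bihom_right_module sa mu alpha beta st (tmap st tn alpha alpha) (tmap st tn beta beta)
    (tens_ract st tn mu alpha psi)"
proof -
  note lin [simp] = bihom_assoc_alg_linear[OF alg] lin_psi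
  from alg have "alpha \<circ> beta = beta \<circ> alpha"
    and mult_alpha: "\<And>x y. alpha (mu x y) = mu (alpha x) (alpha y)"
    and mult_beta: "\<And>x y. beta (mu x y) = mu (beta x) (beta y)"
    and assoc: "\<And>x y z. mu (alpha x) (mu y z) = mu (mu x y) (beta z)"
    unfolding bihom_assoc_alg_def by auto
  with assms have comm: "alpha (psi x) = psi (alpha x)" "beta (psi x) = psi (beta x)" for x
    by (metis comp_apply)+
  have "Vector_Spaces.linear sa st (tens_ract st tn mu alpha psi m)" for m
    unfolding tens_ract_def
  proof (rule linear_in_parameter[where F = "\<lambda>a. tmap st tn alpha (\<lambda>c. mu c (psi a))"])
    show "Vector_Spaces.linear sa st (\<lambda>a. tmap st tn alpha (\<lambda>c. mu c (psi a)) (tn x y))" for x y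
      using Vector_Spaces.linear_compose[OF Vector_Spaces.linear_compose[OF lin_psi lin(4)] linear_tn_right]
      by (simp add: o_def)
  qed (simp_all add: tmap_linear)
  then have "bilin st sa st (tens_ract st tn mu alpha psi)"
    unfolding bilin_def tens_ract_def by (simp add: tmap_linear)
  moreover have "alpha \<circ> (\<lambda>c. mu c (psi a)) = (\<lambda>c. mu c (psi (alpha a))) \<circ> alpha" for a
    by (simp add: fun_eq_iff mult_alpha comm)
  moreover have "beta \<circ> (\<lambda>c. mu c (psi a)) = (\<lambda>c. mu c (psi (beta a))) \<circ> beta" for a
    by (simp add: fun_eq_iff mult_beta comm)
  moreover have "(\<lambda>c. mu c (psi (mu a a'))) \<circ> alpha = (\<lambda>c. mu c (psi (beta a'))) \<circ> (\<lambda>c. mu c (psi a))"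
    for a a'
    by (simp add: fun_eq_iff mult_psi assoc flip: comm)
  ultimately show ?thesis
    unfolding bihom_right_module_def tens_ract_def
    using alg vector_space_t tmap_diag_commute[of alpha beta] \<open>alpha \<circ> beta = beta \<circ> alpha\<close>
    by (simp add: tmap_linear tmap_tmap)
qed

lemma tens_actions_compatible:
  assumes alg: "bihom_assoc_alg sa mu alpha beta"
    and "Vector_Spaces.linear sa sa psi" "Vector_Spaces.linear sa sa omega"
    and "alpha \<circ> omega = omega \<circ> alpha" "beta \<circ> psi = psi \<circ> beta"
  shows "tens_lact st tn mu beta omega (alpha a) (tens_ract st tn mu alpha psi m a') =
    tens_ract st tn mu alpha psi (tens_lact st tn mu beta omega a m) (beta a')"
proof -
  note lin [simp] = bihom_assoc_alg_linear[OF alg] assms(2,3)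
  from alg have mult_alpha: "\<And>x y. alpha (mu x y) = mu (alpha x) (alpha y)"
    and mult_beta: "\<And>x y. beta (mu x y) = mu (beta x) (beta y)"
    unfolding bihom_assoc_alg_def by auto
  from assms have comm: "alpha (omega x) = omega (alpha x)" "beta (psi x) = psi (beta x)" for x
    by (metis comp_apply)+
  have "mu (omega (alpha a)) \<circ> alpha = alpha \<circ> mu (omega a)"
    and "beta \<circ> (\<lambda>c. mu c (psi a')) = (\<lambda>c. mu c (psi (beta a'))) \<circ> beta"
    by (simp_all add: fun_eq_iff mult_alpha mult_beta comm)
  then show ?thesis
    unfolding tens_lact_def tens_ract_def by (simp add: tmap_tmap)
qed

end

theorem lemma4p2:
  fixes sa :: "'k::field \<Rightarrow> 'a::ab_group_add \<Rightarrow> 'a"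
    and st :: "'k \<Rightarrow> 't::ab_group_add \<Rightarrow> 't" and tn :: "'a \<Rightarrow> 'a \<Rightarrow> 't"
    and su :: "'k \<Rightarrow> 'u::ab_group_add \<Rightarrow> 'u" and tn3 :: "'a \<Rightarrow> 'a \<Rightarrow> 'a \<Rightarrow> 'u"
    and mu :: "'a \<Rightarrow> 'a \<Rightarrow> 'a" and Delta :: "'a \<Rightarrow> 't"
    and alpha beta psi omega :: "'a \<Rightarrow> 'a"
  assumes "is_tensor2 sa st tn su"
    and "is_tensor3 sa su tn3"
    and "inf_bihom_bialg sa st tn su tn3 mu Delta alpha beta psi omega"
  shows "bihom_bimodule sa mu alpha beta st (tmap st tn alpha alpha) (tmap st tn beta beta)
           (tens_lact st tn mu beta omega) (tens_ract st tn mu alpha psi)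
         \<and> (\<forall>a b. Delta (mu a b) =
              tens_lact st tn mu beta omega a (Delta b) + tens_ract st tn mu alpha psi (Delta a) b)"
proof -
  interpret tensor_square sa st tn
    using assms(1) by (simp add: tensor_square_def is_tensor2_def)
  from assms(3) have alg: "bihom_assoc_alg sa mu alpha beta"
    and lin: "Vector_Spaces.linear sa sa psi" "Vector_Spaces.linear sa sa omega"
    and mult: "\<And>x y. psi (mu x y) = mu (psi x) (psi y)" "\<And>x y. omega (mu x y) = mu (omega x) (omega y)"
    and comm: "alpha \<circ> psi = psi \<circ> alpha" "alpha \<circ> omega = omega \<circ> alpha"
      "beta \<circ> psi = psi \<circ> beta" "beta \<circ> omega = omega \<circ> beta"
    and Delta_mu: "\<forall>a b. Delta (mu a b) =
      tmap st tn (\<lambda>x. mu (omega a) x) beta (Delta b) + tmap st tn alpha (\<lambda>y. mu y (psi b)) (Delta a)"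
    unfolding inf_bihom_bialg_def bihom_coassoc_coalg_def by auto
  have "bihom_bimodule sa mu alpha beta st (tmap st tn alpha alpha) (tmap st tn beta beta)
      (tens_lact st tn mu beta omega) (tens_ract st tn mu alpha psi)"
    unfolding bihom_bimodule_def
    using tens_lact_left_module[OF alg lin(2) mult(2) comm(2,4)]
      tens_ract_right_module[OF alg lin(1) mult(1) comm(1,3)]
      tens_actions_compatible[OF alg lin comm(2,3)]
    by blast
  moreover have "\<forall>a b. Delta (mu a b) =
      tens_lact st tn mu beta omega a (Delta b) + tens_ract st tn mu alpha psi (Delta a) b"
    using Delta_mu unfolding tens_lact_def tens_ract_def .
  ultimately show ?thesis ..
qed

end
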